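(* Let $\sigma,\tau\in S_n$ be almost similar permutations of order $m$, and let $\mathrm{fix}(\sigma)$ denote the number of fixed points of $\sigma$. Then: (1) if $\mathrm{fix}(\sigma)=\mathrm{fix}(\tau)$, then $\sigma$ and $\tau$ are conjugate in $S_n$; (2) for every prime $p$ dividing $m$, $p$ divides $\mathrm{fix}(\sigma)-\mathrm{fix}(\tau)$.
   Context: Two permutations $\sigma,\tau\in S_n$ are called almost similar if they have the same order $m$ and for every divisor $k\neq1$ of $m$, $\sigma^k$ and $\tau^k$ are conjugate in $S_n$. *)

theory Defs
  imports "HOL-Combinatorics.Permutations" "HOL-Computational_Algebra.Primes"
begin

text \<open>S_n is modelled as the permutations of {..<n} (functions that permute {..<n}
and are the identity elsewhere).\<close>

definition perm_order :: "(nat \<Rightarrow> nat) \<Rightarrow> nat" where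
  "perm_order \<sigma> = (LEAST m. 0 < m \<and> (\<sigma> ^^ m) = id)"

definition conj_in_Sn :: "nat \<Rightarrow> (nat \<Rightarrow> nat) \<Rightarrow> (nat \<Rightarrow> nat) \<Rightarrow> bool" where
  "conj_in_Sn n \<sigma> \<tau> \<longleftrightarrow> (\<exists>\<rho>. \<rho> permutes {..<n} \<and> \<tau> = \<rho> \<circ> \<sigma> \<circ> inv \<rho>)"

definition almost_similar :: "nat \<Rightarrow> (nat \<Rightarrow> nat) \<Rightarrow> (nat \<Rightarrow> nat) \<Rightarrow> bool" where
  "almost_similar n \<sigma> \<tau> \<longleftrightarrow>
     perm_order \<sigma> = perm_order \<tau> \<and>
     (\<forall>k. k dvd perm_order \<sigma> \<and> k \<noteq> 1 \<longrightarrow> conj_in_Sn n (\<sigma> ^^ k) (\<tau> ^^ k))"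

definition num_fix :: "nat \<Rightarrow> (nat \<Rightarrow> nat) \<Rightarrow> nat" where
  "num_fix n \<sigma> = card {i. i < n \<and> \<sigma> i = i}"

end

theory Submission
  imports Defs "HOL-Combinatorics.Cycles" "HOL-Combinatorics.Orbits"
begin

(* Write c_d(f) for the number of points whose cycle under f has length d (least_power f x = d).
   Then fix(f^k) is the sum of c_d(f) over the divisors d of k, so the numbers fix(f^k), k > 0,
   determine all c_d(f) by induction on d, and equal c_d for all d means equal cycle type, hence
   conjugacy (cycles of equal length are matched one at a time). Since every cycle length divides
   the order m, fix(f^k) only depends on gcd(k, m); conjugation preserves fix, so for almost similar
   permutations fix(sigma^k) = fix(tau^k) whenever gcd(k, m) is not 1, and for all k once also
   fix(sigma) = fix(tau). For a prime p dividing m, fix(sigma^p) = fix(sigma) + c_p(sigma), and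
   c_p(sigma) is a multiple of p because the points it counts fall into cycles of length p. *)

lemma funpow_eq_funpow_iff_mod_least_power:
  assumes "permutation f"
  shows "(f ^^ i) x = (f ^^ j) x \<longleftrightarrow> i mod least_power f x = j mod least_power f x"
proof
  let ?d = "least_power f x"
  have inj: "inj_on (\<lambda>i. (f ^^ i) x) {..<?d}"
    using cycle_of_permutation[OF assms, of x] by (simp add: distinct_map atLeast0LessThan)
  assume "(f ^^ i) x = (f ^^ j) x"
  then have "(f ^^ (i mod ?d)) x = (f ^^ (j mod ?d)) x"
    using funpow_mod_eq[OF least_power_of_permutation(1)[OF assms]] by simp
  then show "i mod ?d = j mod ?d"
    using inj_onD[OF inj] least_power_of_permutation(2)[OF assms] by simp
next
  assume "i mod least_power f x = j mod least_power f x"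
  then show "(f ^^ i) x = (f ^^ j) x"
    by (metis funpow_mod_eq least_power_of_permutation(1)[OF assms])
qed

lemma orbit_eq_range_funpow:
  assumes "permutation f"
  shows "orbit f x = range (\<lambda>n. (f ^^ n) x)"
  using orbit_altdef_permutation[OF assms] by auto

lemma card_orbit_permutation:
  assumes "permutation f"
  shows "card (orbit f x) = least_power f x"
proof -
  have "orbit f x = set (support f x)"
    using support_set[OF assms] orbit_eq_range_funpow[OF assms] by simp
  then show ?thesis
    using distinct_card[OF cycle_of_permutation[OF assms]] by simp
qed

lemma orbit_eq_if_mem_orbit:
  assumes "permutation f" "y \<in> orbit f x"
  shows "orbit f y = orbit f x"
  using orbit_cyclic_eq3[OF cyclic_on_orbit'[OF assms(1)] assms(2)] .

lemma orbit_disjoint_if_neq: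
  assumes "permutation f" "orbit f x \<noteq> orbit f y"
  shows "orbit f x \<inter> orbit f y = {}"
proof (rule ccontr)
  assume "orbit f x \<inter> orbit f y \<noteq> {}"
  then obtain z where "z \<in> orbit f x" "z \<in> orbit f y" by blast
  then show False
    using orbit_eq_if_mem_orbit[OF assms(1), of z x] orbit_eq_if_mem_orbit[OF assms(1), of z y]
      assms(2) by simp
qed

lemma least_power_eq_if_mem_orbit:
  assumes "permutation f" "y \<in> orbit f x"
  shows "least_power f y = least_power f x"
  using card_orbit_permutation[OF assms(1)] orbit_eq_if_mem_orbit[OF assms] by metis

lemma orbit_subset_if_image_subset:
  assumes "f ` S \<subseteq> S" "x \<in> S"
  shows "orbit f x \<subseteq> S"
proof
  fix y assume "y \<in> orbit f x"
  then show "y \<in> S" by induct (use assms in auto)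
qed

lemma orbit_subset_same_least_power:
  assumes "permutation f" "f ` S \<subseteq> S" "x \<in> S"
  shows "orbit f x \<subseteq> {z \<in> S. least_power f z = least_power f x}"
  using orbit_subset_if_image_subset[OF assms(2,3)] least_power_eq_if_mem_orbit[OF assms(1)] by blast

lemma image_diff_orbit_subset:
  assumes "permutation f" "f ` S \<subseteq> S"
  shows "f ` (S - orbit f x) \<subseteq> S - orbit f x"
proof -
  have "z \<in> orbit f x" if "f z \<in> orbit f x" for z
    using orbit_eq_if_mem_orbit[OF assms(1) that] permutation_orbit_step[OF assms(1)]
      permutation_self_in_orbit[OF assms(1)] by blast
  then show ?thesis using assms(2) by blast
qed

lemma card_least_power_diff_orbit:
  assumes "permutation f" "finite S" "f ` S \<subseteq> S" "x \<in> S"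
  shows "card {z \<in> S - orbit f x. least_power f z = d} =
         card {z \<in> S. least_power f z = d} - (if d = least_power f x then d else 0)"
proof (cases "d = least_power f x")
  case True
  have "{z \<in> S - orbit f x. least_power f z = d} = {z \<in> S. least_power f z = d} - orbit f x"
    by blast
  then show ?thesis
    using True card_Diff_subset[OF finite_orbit[OF permutation_self_in_orbit[OF assms(1)]]
        orbit_subset_same_least_power[OF assms(1,3,4)]] card_orbit_permutation[OF assms(1)]
    by simp
next
  case False
  then have "{z \<in> S - orbit f x. least_power f z = d} = {z \<in> S. least_power f z = d}"
    using least_power_eq_if_mem_orbit[OF assms(1)] by blast
  then show ?thesis using False by simp
qed

lemma dvd_card_least_power_eq:
  assumes "permutation f" "finite S" "f ` S \<subseteq> S"
  shows "d dvd card {x \<in> S. least_power f x = d}"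
proof -
  let ?A = "{x \<in> S. least_power f x = d}"
  have A_eq: "?A = \<Union> (orbit f ` ?A)"
  proof
    show "?A \<subseteq> \<Union> (orbit f ` ?A)"
      using permutation_self_in_orbit[OF assms(1)] by fast
    show "\<Union> (orbit f ` ?A) \<subseteq> ?A"
      using orbit_subset_same_least_power[OF assms(1,3)] by fastforce
  qed
  moreover have "d dvd card (\<Union> (orbit f ` ?A))"
  proof (rule dvd_partition)
    show "finite (\<Union> (orbit f ` ?A))"
      unfolding A_eq[symmetric] using assms(2) by simp
    show "\<forall>c\<in>orbit f ` ?A. d dvd card c"
      using card_orbit_permutation[OF assms(1)] by auto
    show "\<forall>c1\<in>orbit f ` ?A. \<forall>c2\<in>orbit f ` ?A. c1 \<noteq> c2 \<longrightarrow> c1 \<inter> c2 = {}"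
      using orbit_disjoint_if_neq[OF assms(1)] by auto
  qed
  ultimately show ?thesis by simp
qed

lemma orbit_conjugating_bij_exists:
  assumes f: "permutation f" and g: "permutation g"
    and period: "least_power g y = least_power f x"
  obtains \<rho> where "bij_betw \<rho> (orbit f x) (orbit g y)"
    and "\<And>z. z \<in> orbit f x \<Longrightarrow> \<rho> (f z) = g (\<rho> z)"
proof -
  define \<rho> where "\<rho> z = (g ^^ (SOME i. (f ^^ i) x = z)) y" for z
  have \<rho>_funpow: "\<rho> ((f ^^ i) x) = (g ^^ i) y" for i
  proof -
    have "(f ^^ (SOME j. (f ^^ j) x = (f ^^ i) x)) x = (f ^^ i) x"
      by (rule someI[of _ i]) simp
    then show ?thesis
      unfolding \<rho>_def funpow_eq_funpow_iff_mod_least_power[OF f]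
      by (simp add: funpow_eq_funpow_iff_mod_least_power[OF g] period)
  qed
  have "\<rho> ` orbit f x = orbit g y"
    unfolding orbit_eq_range_funpow[OF f] orbit_eq_range_funpow[OF g]
    by (simp add: image_image \<rho>_funpow)
  moreover have "card (orbit f x) = card (orbit g y)" "finite (orbit f x)"
    using card_orbit_permutation[OF f] card_orbit_permutation[OF g] period
      finite_orbit[OF permutation_self_in_orbit[OF f]] by simp_all
  ultimately have "bij_betw \<rho> (orbit f x) (orbit g y)"
    by (simp add: bij_betw_def eq_card_imp_inj_on)
  moreover have "\<rho> (f z) = g (\<rho> z)" if z: "z \<in> orbit f x" for z
  proof -
    obtain i where "z = (f ^^ i) x"
      using z unfolding orbit_eq_range_funpow[OF f] by blast
    then show ?thesis
      using \<rho>_funpow[of "Suc i"] \<rho>_funpow[of i] by simp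
  qed
  ultimately show ?thesis using that by blast
qed

lemma conjugating_bij_exists_by_splitting:
  assumes "f ` A \<subseteq> A" "f ` (S - A) \<subseteq> S - A" "A \<subseteq> S" "B \<subseteq> T"
    and "bij_betw \<rho>\<^sub>0 A B" "\<forall>z\<in>A. \<rho>\<^sub>0 (f z) = g (\<rho>\<^sub>0 z)"
    and "bij_betw \<rho>\<^sub>1 (S - A) (T - B)" "\<forall>z\<in>S - A. \<rho>\<^sub>1 (f z) = g (\<rho>\<^sub>1 z)"
  shows "\<exists>\<rho>. bij_betw \<rho> S T \<and> (\<forall>z\<in>S. \<rho> (f z) = g (\<rho> z))"
proof -
  define \<rho> where "\<rho> z = (if z \<in> A then \<rho>\<^sub>0 z else \<rho>\<^sub>1 z)" for z
  have "bij_betw \<rho> (A \<union> (S - A)) (B \<union> (T - B))"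
    unfolding \<rho>_def by (rule bij_betw_disjoint_Un[OF assms(5,7)]) auto
  moreover have "A \<union> (S - A) = S" "B \<union> (T - B) = T"
    using assms(3,4) by auto
  moreover have "\<rho> (f z) = g (\<rho> z)" if z: "z \<in> S" for z
  proof (cases "z \<in> A")
    case True
    then have "f z \<in> A" using assms(1) by blast
    then show ?thesis using True assms(6) by (simp add: \<rho>_def)
  next
    case False
    then have "f z \<notin> A" using assms(2) z by blast
    then show ?thesis using False z assms(8) by (simp add: \<rho>_def)
  qed
  ultimately show ?thesis by auto
qed

lemma obtain_least_power_eq_if_counts_eq:
  assumes "finite S" "x \<in> S"
    and "card {z \<in> S. least_power f z = least_power f x} =
         card {z \<in> T. least_power g z = least_power f x}"
  obtains y where "y \<in> T" "least_power g y = least_power f x"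
proof -
  have "card {z \<in> S. least_power f z = least_power f x} \<noteq> 0"
    using assms(1,2) by (auto simp: card_eq_0_iff)
  then have "{z \<in> T. least_power g z = least_power f x} \<noteq> {}"
    using assms(3) by (metis card.empty)
  then show ?thesis using that by blast
qed

lemma conjugating_bij_exists_if_least_power_counts_eq:
  assumes f: "permutation f" and g: "permutation g"
  shows "\<lbrakk>finite S; finite T; f ` S \<subseteq> S; g ` T \<subseteq> T;
          \<And>d. card {x \<in> S. least_power f x = d} = card {y \<in> T. least_power g y = d}\<rbrakk>
         \<Longrightarrow> \<exists>\<rho>. bij_betw \<rho> S T \<and> (\<forall>x\<in>S. \<rho> (f x) = g (\<rho> x))"
proof (induction S arbitrary: T rule: finite_psubset_induct)
  case (psubset S)
  show ?case
  proof (cases "S = {}")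
    case True
    have "T = {}"
    proof (rule ccontr)
      assume "T \<noteq> {}"
      then obtain y where y: "y \<in> T" by blast
      have "card {z \<in> T. least_power g z = least_power g y} =
            card {z \<in> S. least_power f z = least_power g y}"
        using psubset.prems(4) by simp
      then obtain x where "x \<in> S"
        by (rule obtain_least_power_eq_if_counts_eq[OF psubset.prems(1) y])
      with True show False by simp
    qed
    with True show ?thesis by (auto simp: bij_betw_def)
  next
    case False
    then obtain x where x: "x \<in> S" by blast
    obtain y where y: "y \<in> T" and period: "least_power g y = least_power f x"
      using obtain_least_power_eq_if_counts_eq[OF psubset.hyps(1) x psubset.prems(4)] .
    have "\<exists>\<rho>. bij_betw \<rho> (S - orbit f x) (T - orbit g y) \<and>
              (\<forall>z\<in>S - orbit f x. \<rho> (f z) = g (\<rho> z))"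
    proof (rule psubset.IH)
      show "S - orbit f x \<subset> S" using x permutation_self_in_orbit[OF f] by blast
      show "card {z \<in> S - orbit f x. least_power f z = e} =
            card {z \<in> T - orbit g y. least_power g z = e}" for e
        using card_least_power_diff_orbit[OF f psubset.hyps(1) psubset.prems(2) x]
          card_least_power_diff_orbit[OF g psubset.prems(1,3) y] psubset.prems(4) period
        by simp
      show "finite (T - orbit g y)" using psubset.prems(1) by simp
      show "f ` (S - orbit f x) \<subseteq> S - orbit f x"
        by (rule image_diff_orbit_subset[OF f psubset.prems(2)])
      show "g ` (T - orbit g y) \<subseteq> T - orbit g y"
        by (rule image_diff_orbit_subset[OF g psubset.prems(3)])
    qed
    then obtain \<rho>\<^sub>1 where \<rho>\<^sub>1: "bij_betw \<rho>\<^sub>1 (S - orbit f x) (T - orbit g y)"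
      "\<forall>z\<in>S - orbit f x. \<rho>\<^sub>1 (f z) = g (\<rho>\<^sub>1 z)" by blast
    obtain \<rho>\<^sub>0 where \<rho>\<^sub>0: "bij_betw \<rho>\<^sub>0 (orbit f x) (orbit g y)"
      "\<And>z. z \<in> orbit f x \<Longrightarrow> \<rho>\<^sub>0 (f z) = g (\<rho>\<^sub>0 z)"
      using orbit_conjugating_bij_exists[OF f g period] by blast
    show ?thesis
    proof (rule conjugating_bij_exists_by_splitting[where \<rho>\<^sub>0 = \<rho>\<^sub>0 and \<rho>\<^sub>1 = \<rho>\<^sub>1])
      show "f ` orbit f x \<subseteq> orbit f x" by (simp add: image_subset_iff orbit.step)
      show "f ` (S - orbit f x) \<subseteq> S - orbit f x"
        by (rule image_diff_orbit_subset[OF f psubset.prems(2)])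
      show "orbit f x \<subseteq> S" by (rule orbit_subset_if_image_subset[OF psubset.prems(2) x])
      show "orbit g y \<subseteq> T" by (rule orbit_subset_if_image_subset[OF psubset.prems(3) y])
      show "bij_betw \<rho>\<^sub>0 (orbit f x) (orbit g y)" by (rule \<rho>\<^sub>0(1))
      show "\<forall>z\<in>orbit f x. \<rho>\<^sub>0 (f z) = g (\<rho>\<^sub>0 z)" using \<rho>\<^sub>0(2) by blast
    qed (fact \<rho>\<^sub>1)+
  qed
qed

lemma card_funpow_fixpoints_eq_sum_least_power:
  assumes "permutation f" "finite S" "0 < k"
  shows "card {x \<in> S. (f ^^ k) x = x} = (\<Sum>d | d dvd k. card {x \<in> S. least_power f x = d})"
proof -
  have "{x \<in> S. (f ^^ k) x = x} = (\<Union>d \<in> {d. d dvd k}. {x \<in> S. least_power f x = d})"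
    using least_power_dvd[OF assms(1)] by auto
  also have "card \<dots> = (\<Sum>d | d dvd k. card {x \<in> S. least_power f x = d})"
    by (rule card_UN_disjoint) (use assms(2,3) in auto)
  finally show ?thesis .
qed

lemma card_funpow_prime_fixpoints:
  assumes "permutation f" "finite S" "prime p"
  shows "card {x \<in> S. (f ^^ p) x = x} =
         card {x \<in> S. f x = x} + card {x \<in> S. least_power f x = p}"
proof -
  have "{d. d dvd p} = {1, p}"
    using assms(3) by (auto simp: prime_nat_iff)
  moreover have "least_power f x = 1 \<longleftrightarrow> f x = x" for x
    using least_power_dvd[OF assms(1), of x 1] by simp
  ultimately show ?thesis
    using card_funpow_fixpoints_eq_sum_least_power[OF assms(1,2) prime_gt_0_nat[OF assms(3)]]
      prime_gt_1_nat[OF assms(3)] by simp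
qed

lemma least_power_counts_eq_if_funpow_fixpoint_counts_eq:
  assumes f: "permutation f" and g: "permutation g" and S: "finite S" and T: "finite T"
    and fix_eq: "\<And>k. 0 < k \<Longrightarrow> card {x \<in> S. (f ^^ k) x = x} = card {y \<in> T. (g ^^ k) y = y}"
  shows "card {x \<in> S. least_power f x = d} = card {y \<in> T. least_power g y = d}"
proof (induction d rule: less_induct)
  case (less d)
  show ?case
  proof (cases "d = 0")
    case True
    then show ?thesis
      by (simp add: least_power_of_permutation(2)[OF f, THEN gr_implies_not0]
          least_power_of_permutation(2)[OF g, THEN gr_implies_not0])
  next
    case False
    have divisors: "{e. e dvd d} = insert d {e. e dvd d \<and> e < d}"
      using False by (auto dest: dvd_imp_le)
    have "(\<Sum>e | e dvd d \<and> e < d. card {x \<in> S. least_power f x = e}) =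
          (\<Sum>e | e dvd d \<and> e < d. card {y \<in> T. least_power g y = e})"
      using less.IH by (intro sum.cong) auto
    then show ?thesis
      using fix_eq[of d] False
        card_funpow_fixpoints_eq_sum_least_power[OF f S, of d]
        card_funpow_fixpoints_eq_sum_least_power[OF g T, of d]
      unfolding divisors by simp
  qed
qed

lemma funpow_perm_order_eq_id:
  assumes "permutation \<sigma>"
  shows "\<sigma> ^^ perm_order \<sigma> = id"
proof -
  obtain k where "\<sigma> ^^ k = id" "0 < k"
    using permutation_is_nilpotent[OF assms] .
  then show ?thesis
    unfolding perm_order_def by (metis (mono_tags, lifting) LeastI)
qed

lemma funpow_fixpoint_iff_gcd_perm_order:
  assumes "permutation \<sigma>"
  shows "(\<sigma> ^^ k) x = x \<longleftrightarrow> (\<sigma> ^^ gcd k (perm_order \<sigma>)) x = x"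
proof -
  have "least_power \<sigma> x dvd perm_order \<sigma>"
    using least_power_dvd[OF assms, of x "perm_order \<sigma>"] funpow_perm_order_eq_id[OF assms] by simp
  then show ?thesis
    unfolding least_power_dvd[OF assms, symmetric] by (simp add: gcd_greatest_iff)
qed

lemma num_fix_funpow_gcd_perm_order:
  assumes "permutation \<sigma>"
  shows "num_fix n (\<sigma> ^^ k) = num_fix n (\<sigma> ^^ gcd k (perm_order \<sigma>))"
  unfolding num_fix_def using funpow_fixpoint_iff_gcd_perm_order[OF assms] by simp

lemma num_fix_eq_if_conj_in_Sn:
  assumes "conj_in_Sn n \<alpha> \<beta>"
  shows "num_fix n \<alpha> = num_fix n \<beta>"
proof -
  obtain \<rho> where \<rho>: "\<rho> permutes {..<n}" and \<beta>: "\<beta> = \<rho> \<circ> \<alpha> \<circ> inv \<rho>"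
    using assms unfolding conj_in_Sn_def by blast
  have "\<beta> (\<rho> x) = \<rho> x \<longleftrightarrow> \<alpha> x = x" for x
    using \<beta> permutes_inverses(2)[OF \<rho>] permutes_inj[OF \<rho>] by (simp add: inj_eq)
  then have "{y \<in> \<rho> ` {..<n}. \<beta> y = y} = \<rho> ` {x \<in> {..<n}. \<alpha> x = x}"
    by blast
  then have "{y. y < n \<and> \<beta> y = y} = \<rho> ` {x. x < n \<and> \<alpha> x = x}"
    unfolding permutes_image[OF \<rho>] by simp
  then show ?thesis
    unfolding num_fix_def using permutes_inj[OF \<rho>] by (simp add: card_image inj_on_subset)
qed

lemma num_fix_funpow_eq_if_almost_similar:
  assumes \<sigma>: "\<sigma> permutes {..<n}" and \<tau>: "\<tau> permutes {..<n}" and sim: "almost_similar n \<sigma> \<tau>"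
    and "gcd k (perm_order \<sigma>) \<noteq> 1"
  shows "num_fix n (\<sigma> ^^ k) = num_fix n (\<tau> ^^ k)"
proof -
  let ?g = "gcd k (perm_order \<sigma>)"
  have order: "perm_order \<tau> = perm_order \<sigma>" and conj: "conj_in_Sn n (\<sigma> ^^ ?g) (\<tau> ^^ ?g)"
    using sim assms(4) unfolding almost_similar_def by auto
  have "num_fix n (\<sigma> ^^ k) = num_fix n (\<sigma> ^^ ?g)"
    using num_fix_funpow_gcd_perm_order[OF permutes_imp_permutation[OF finite_lessThan \<sigma>]] .
  also have "\<dots> = num_fix n (\<tau> ^^ ?g)"
    using num_fix_eq_if_conj_in_Sn[OF conj] .
  also have "\<dots> = num_fix n (\<tau> ^^ k)"
    using num_fix_funpow_gcd_perm_order[OF permutes_imp_permutation[OF finite_lessThan \<tau>]] order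
    by simp
  finally show ?thesis .
qed

lemma conj_in_Sn_if_bij_betw_commute:
  assumes \<sigma>: "\<sigma> permutes {..<n}" and \<tau>: "\<tau> permutes {..<n}"
    and \<rho>: "bij_betw \<rho> {..<n} {..<n}" and commute: "\<forall>x\<in>{..<n}. \<rho> (\<sigma> x) = \<tau> (\<rho> x)"
  shows "conj_in_Sn n \<sigma> \<tau>"
proof -
  let ?r = "restrict_id \<rho> {..<n}"
  have r: "?r permutes {..<n}"
    using permutes_restrict_id[OF \<rho>] .
  have r_commute: "\<tau> \<circ> ?r = ?r \<circ> \<sigma>"
  proof
    fix x
    show "(\<tau> \<circ> ?r) x = (?r \<circ> \<sigma>) x"
      using commute permutes_in_image[OF \<sigma>, of x] permutes_not_in[OF \<sigma>, of x]
        permutes_not_in[OF \<tau>, of x]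
      by (cases "x < n") auto
  qed
  have "\<tau> = \<tau> \<circ> (?r \<circ> inv ?r)"
    using permutes_inv_o(1)[OF r] by simp
  also have "\<dots> = ?r \<circ> \<sigma> \<circ> inv ?r"
    unfolding r_commute[symmetric] by (simp only: comp_assoc)
  finally show ?thesis
    unfolding conj_in_Sn_def using r by blast
qed

lemma conj_in_Sn_if_almost_similar_num_fix_eq:
  assumes \<sigma>: "\<sigma> permutes {..<n}" and \<tau>: "\<tau> permutes {..<n}" and sim: "almost_similar n \<sigma> \<tau>"
    and fix_eq: "num_fix n \<sigma> = num_fix n \<tau>"
  shows "conj_in_Sn n \<sigma> \<tau>"
proof -
  have perm: "permutation \<sigma>" "permutation \<tau>"
    using permutes_imp_permutation[OF finite_lessThan] \<sigma> \<tau> by auto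
  have powers: "num_fix n (\<sigma> ^^ k) = num_fix n (\<tau> ^^ k)" for k
  proof (cases "gcd k (perm_order \<sigma>) = 1")
    case True
    have "perm_order \<tau> = perm_order \<sigma>"
      using sim unfolding almost_similar_def by simp
    then show ?thesis
      using True fix_eq num_fix_funpow_gcd_perm_order[OF perm(1), of n k]
        num_fix_funpow_gcd_perm_order[OF perm(2), of n k] by simp
  next
    case False
    then show ?thesis by (rule num_fix_funpow_eq_if_almost_similar[OF \<sigma> \<tau> sim])
  qed
  have counts: "card {x \<in> {..<n}. least_power \<sigma> x = d} = card {y \<in> {..<n}. least_power \<tau> y = d}"
    for d
    using least_power_counts_eq_if_funpow_fixpoint_counts_eq[OF perm finite_lessThan finite_lessThan]
      powers unfolding num_fix_def by simp
  obtain \<rho> where "bij_betw \<rho> {..<n} {..<n}" "\<forall>x\<in>{..<n}. \<rho> (\<sigma> x) = \<tau> (\<rho> x)"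
    using conjugating_bij_exists_if_least_power_counts_eq[OF perm finite_lessThan finite_lessThan
        equalityD1[OF permutes_image[OF \<sigma>]] equalityD1[OF permutes_image[OF \<tau>]] counts]
    by blast
  then show ?thesis
    by (rule conj_in_Sn_if_bij_betw_commute[OF \<sigma> \<tau>])
qed

lemma prime_dvd_num_fix_diff_if_almost_similar:
  assumes \<sigma>: "\<sigma> permutes {..<n}" and \<tau>: "\<tau> permutes {..<n}" and sim: "almost_similar n \<sigma> \<tau>"
    and p: "prime p" "p dvd perm_order \<sigma>"
  shows "int p dvd int (num_fix n \<sigma>) - int (num_fix n \<tau>)"
proof -
  have perm: "permutation \<sigma>" "permutation \<tau>"
    using permutes_imp_permutation[OF finite_lessThan] \<sigma> \<tau> by auto
  have "gcd p (perm_order \<sigma>) \<noteq> 1"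
    using gcd_nat.absorb1[OF p(2)] prime_gt_1_nat[OF p(1)] by simp
  then have "num_fix n (\<sigma> ^^ p) = num_fix n (\<tau> ^^ p)"
    by (rule num_fix_funpow_eq_if_almost_similar[OF \<sigma> \<tau> sim])
  then have "num_fix n \<sigma> + card {x \<in> {..<n}. least_power \<sigma> x = p} =
             num_fix n \<tau> + card {x \<in> {..<n}. least_power \<tau> x = p}"
    using card_funpow_prime_fixpoints[OF perm(1) finite_lessThan p(1)]
      card_funpow_prime_fixpoints[OF perm(2) finite_lessThan p(1)]
    unfolding num_fix_def by simp
  then have "int (num_fix n \<sigma>) - int (num_fix n \<tau>) =
             int (card {x \<in> {..<n}. least_power \<tau> x = p}) -
             int (card {x \<in> {..<n}. least_power \<sigma> x = p})"
    by linarith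
  moreover have "p dvd card {x \<in> {..<n}. least_power \<sigma> x = p}"
    by (rule dvd_card_least_power_eq[OF perm(1) finite_lessThan equalityD1[OF permutes_image[OF \<sigma>]]])
  moreover have "p dvd card {x \<in> {..<n}. least_power \<tau> x = p}"
    by (rule dvd_card_least_power_eq[OF perm(2) finite_lessThan equalityD1[OF permutes_image[OF \<tau>]]])
  ultimately show ?thesis
    by (simp add: dvd_diff)
qed

theorem lemma3p7:
  fixes n :: nat and \<sigma> \<tau> :: "nat \<Rightarrow> nat"
  assumes "\<sigma> permutes {..<n}" and "\<tau> permutes {..<n}"
    and "almost_similar n \<sigma> \<tau>"
  shows "(num_fix n \<sigma> = num_fix n \<tau> \<longrightarrow> conj_in_Sn n \<sigma> \<tau>) \<and>
         (\<forall>p::nat. prime p \<and> p dvd perm_order \<sigma> \<longrightarrow>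
             int p dvd int (num_fix n \<sigma>) - int (num_fix n \<tau>))"
  using conj_in_Sn_if_almost_similar_num_fix_eq[OF assms]
    prime_dvd_num_fix_diff_if_almost_similar[OF assms] by blast

end
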